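(* Let $a,b>1$ be real numbers, $h_n:=\frac{1}{a^n}$ and $k_n:=\frac{1}{b^n}$. Let $f$ be a real valued function defined on $D=\{0,h_1,-k_1,h_2,-k_2,\ldots\}$ and let $R,L$ be real numbers. Assume $f(0)=0$ and \[\frac{f(h_n)}{h_n}\to R\quad\text{and}\quad\frac{f(-k_n)}{-k_n}\to L.\] Then: (i) if $\frac{\log a}{\log b}$ is a rational number, then $R$ and $L$ are the only accumulation points of the set of sequential cord derivatives of $f$ at $0$; (ii) if $\frac{\log a}{\log b}$ is irrational, then every real number between $L$ and $R$ is a sequential cord derivative of $f$ at $0$.
   Context: $L'\in\overline{\mathbb{R}}=\mathbb{R}\cup\{\pm\infty\}$ is a sequential cord derivative of $f$ at $0$ if there are sequences $h'_n>0$, $k'_n>0$ with $h'_n\to0$, $k'_n\to0$, $h'_n\in D$, $-k'_n\in D$ for all $n$, and $\frac{f(h'_n)-f(-k'_n)}{h'_n+k'_n}\to L'$. *)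

theory Defs
  imports "HOL-Analysis.Analysis"
begin

definition seq_cord_deriv :: "(real \<Rightarrow> real) \<Rightarrow> real set \<Rightarrow> ereal \<Rightarrow> bool" where
  "seq_cord_deriv f D L' \<longleftrightarrow>
     (\<exists>h k :: nat \<Rightarrow> real.
        (\<forall>n. h n > 0 \<and> k n > 0 \<and> h n \<in> D \<and> - k n \<in> D) \<and>
        h \<longlonglongrightarrow> 0 \<and> k \<longlonglongrightarrow> 0 \<and>
        (\<lambda>n. ereal ((f (h n) - f (- k n)) / (h n + k n))) \<longlonglongrightarrow> L')"

definition cord_domain :: "real \<Rightarrow> real \<Rightarrow> real set" where
  "cord_domain a b = {0} \<union> {1 / a ^ n | n. n \<ge> 1} \<union> {- (1 / b ^ n) | n. n \<ge> 1}"

end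

theory Submission
  imports Defs "HOL-Analysis.Kronecker_Approximation_Theorem" "HOL-Real_Asymp.Real_Asymp"
begin

text \<open>
  For h = 1/a^n and k = 1/b^m the cord quotient (f h - f (-k)) / (h + k) differs from the
  weighted mean (1 - w) L + w R, with weight w = h / (h + k), by an error that vanishes as
  n, m tend to infinity. So the sequential cord derivatives are exactly the cluster values of
  these means, and w depends only on the exponent m ln b - n ln a, through the logistic function.
  If ln a / ln b is irrational, Kronecker's theorem makes these exponents dense in the reals, so
  every weight in [0, 1] and hence every value between L and R occurs in the limit. If it is
  rational, a^q = b^p, the exponents form a discrete lattice: each mean recurs periodically and
  is therefore itself a cord derivative, while the means accumulate only at the two ends of the
  lattice, where the weight tends to 0 or 1, i.e. at L and R.
\<close>

section \<open>Cluster values of double sequences\<close>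

definition cluster_value :: "(nat \<Rightarrow> nat \<Rightarrow> 'a::metric_space) \<Rightarrow> 'a \<Rightarrow> bool" where
  "cluster_value g x \<longleftrightarrow> (\<forall>\<epsilon>>0. \<forall>N. \<exists>n\<ge>N. \<exists>m\<ge>N. dist (g n m) x < \<epsilon>)"

lemma cluster_value_sequentially:
  assumes nn: "filterlim nn at_top sequentially" and mm: "filterlim mm at_top sequentially"
    and lim: "(\<lambda>j. g (nn j) (mm j)) \<longlonglongrightarrow> x"
  shows "cluster_value g x"
  unfolding cluster_value_def
proof (intro allI impI)
  fix \<epsilon> :: real and N assume "\<epsilon> > 0"
  then have "\<forall>\<^sub>F j in sequentially. dist (g (nn j) (mm j)) x < \<epsilon>"
    using lim by (rule tendstoD[rotated])
  moreover have "\<forall>\<^sub>F j in sequentially. N \<le> nn j" "\<forall>\<^sub>F j in sequentially. N \<le> mm j"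
    using nn mm by (simp_all add: filterlim_at_top)
  ultimately have "\<forall>\<^sub>F j in sequentially. N \<le> nn j \<and> N \<le> mm j \<and> dist (g (nn j) (mm j)) x < \<epsilon>"
    by eventually_elim blast
  then show "\<exists>n\<ge>N. \<exists>m\<ge>N. dist (g n m) x < \<epsilon>"
    unfolding eventually_sequentially by blast
qed

lemma cluster_valueE:
  assumes "cluster_value g x"
  obtains nn mm where "\<And>j. j < nn j" "\<And>j. j < mm j" "(\<lambda>j. g (nn j) (mm j)) \<longlonglongrightarrow> x"
proof -
  have "\<forall>j. \<exists>n m. Suc j \<le> n \<and> Suc j \<le> m \<and> dist (g n m) x < inverse (Suc j)"
    using assms unfolding cluster_value_def by simp
  then obtain nn mm where nm: "\<And>j. Suc j \<le> nn j" "\<And>j. Suc j \<le> mm j"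
      "\<And>j. dist (g (nn j) (mm j)) x < inverse (Suc j)"
    by metis
  have "(\<lambda>j. g (nn j) (mm j)) \<longlonglongrightarrow> x"
  proof (rule tendsto_dist_iff[THEN iffD2], rule Lim_null_comparison)
    show "\<forall>\<^sub>F j in sequentially. norm (dist (g (nn j) (mm j)) x) \<le> inverse (real (Suc j))"
      using nm(3) by (intro always_eventually allI) (simp add: less_imp_le)
  qed (rule LIMSEQ_inverse_real_of_nat)
  with nm(1,2) show ?thesis
    by (intro that) (auto simp: Suc_le_eq)
qed

lemma filterlim_at_top_if_ge_ident:
  fixes nn :: "nat \<Rightarrow> nat"
  shows "(\<And>j. j \<le> nn j) \<Longrightarrow> filterlim nn at_top sequentially"
  by (rule filterlim_at_top_mono[OF filterlim_ident]) auto

lemma closed_cluster_values: "closed {x. cluster_value g x}"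
  unfolding closed_limpt
proof (intro allI impI)
  fix x assume "x islimpt {x. cluster_value g x}"
  show "x \<in> {x. cluster_value g x}"
    unfolding mem_Collect_eq cluster_value_def
  proof (intro allI impI)
    fix \<epsilon> :: real and N assume "\<epsilon> > 0"
    then obtain y where "cluster_value g y" "dist y x < \<epsilon> / 2"
      using \<open>x islimpt _\<close> half_gt_zero unfolding islimpt_approachable by blast
    moreover from this(1) obtain n m where "N \<le> n" "N \<le> m" "dist (g n m) y < \<epsilon> / 2"
      using \<open>\<epsilon> > 0\<close> half_gt_zero unfolding cluster_value_def by blast
    ultimately show "\<exists>n\<ge>N. \<exists>m\<ge>N. dist (g n m) x < \<epsilon>"
      using dist_triangle_half_r[of y "g n m" \<epsilon> x] by (metis dist_commute)
  qed
qed

lemma cluster_value_isCont: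
  assumes "cluster_value g x" and "isCont \<phi> x"
  shows "cluster_value (\<lambda>n m. \<phi> (g n m)) (\<phi> x)"
proof -
  obtain nn mm where "\<And>j. j < nn j" "\<And>j. j < mm j" "(\<lambda>j. g (nn j) (mm j)) \<longlonglongrightarrow> x"
    using assms(1) cluster_valueE by blast
  then show ?thesis
    using assms(2) isCont_tendsto_compose
    by (intro cluster_value_sequentially[where nn = nn and mm = mm])
       (auto intro: filterlim_at_top_if_ge_ident less_imp_le)
qed

lemma islimpt_if_subset_closure:
  fixes x :: "'a::t1_space"
  assumes "x islimpt S" and "S \<subseteq> closure T"
  shows "x islimpt T"
proof (rule islimptI)
  fix U assume "x \<in> U" "open U"
  obtain s where "s \<in> S" "s \<in> U" "s \<noteq> x"
    using assms(1) \<open>x \<in> U\<close> \<open>open U\<close> by (rule islimptE)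
  then have "(U - {x}) \<inter> closure T \<noteq> {}"
    using assms(2) by blast
  then have "(U - {x}) \<inter> T \<noteq> {}"
    using open_Int_closure_eq_empty open_delete \<open>open U\<close> by blast
  then show "\<exists>y\<in>T. y \<in> U \<and> y \<noteq> x" by blast
qed

lemma islimpt_range_if_tendsto:
  fixes A :: "'a::first_countable_topology"
  assumes "X \<longlonglongrightarrow> A" and "\<And>n. X n \<noteq> A"
  shows "A islimpt range X"
  using assms unfolding islimpt_sequential by blast

section \<open>Logistic function and cord weights\<close>

definition logistic :: "real \<Rightarrow> real" where
  "logistic x = 1 / (1 + exp (- x))"

lemma logistic_pos: "0 < logistic x"
  unfolding logistic_def by (simp add: add_pos_pos)

lemma logistic_less_one: "logistic x < 1"
  unfolding logistic_def by (simp add: add_pos_pos)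

lemma logistic_logit:
  assumes "0 < t" "t < 1"
  shows "logistic (ln (t / (1 - t))) = t"
  using assms unfolding logistic_def by (simp add: exp_minus field_simps)

lemma isCont_logistic: "isCont logistic x"
  unfolding logistic_def by (intro continuous_intros) (use exp_gt_zero[of "- x"] in linarith)

lemma logistic_tendsto_at_top: "(logistic \<longlongrightarrow> 1) at_top"
  unfolding logistic_def by real_asymp

lemma logistic_tendsto_at_bot: "(logistic \<longlongrightarrow> 0) at_bot"
  unfolding logistic_def by real_asymp

definition cord_quotient :: "(real \<Rightarrow> real) \<Rightarrow> real \<Rightarrow> real \<Rightarrow> real" where
  "cord_quotient f h k = (f h - f (- k)) / (h + k)"

lemma cord_quotient_approx:
  assumes "h > 0" "k > 0"
  shows "\<bar>cord_quotient f h k - ((1 - h / (h + k)) * L + h / (h + k) * R)\<bar>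
    \<le> \<bar>f h / h - R\<bar> + \<bar>f (- k) / (- k) - L\<bar>"
proof -
  define e\<^sub>1 where "e\<^sub>1 = f h / h - R"
  define e\<^sub>2 where "e\<^sub>2 = f (- k) / (- k) - L"
  have f: "f h = h * (R + e\<^sub>1)" "f (- k) = - k * (L + e\<^sub>2)"
    using assms unfolding e\<^sub>1_def e\<^sub>2_def by simp_all
  have "1 - h / (h + k) = k / (h + k)"
    using assms by (simp add: field_simps)
  then have "(1 - h / (h + k)) * L + h / (h + k) * R = (k * L + h * R) / (h + k)"
    by (simp add: add_divide_distrib)
  then have "cord_quotient f h k - ((1 - h / (h + k)) * L + h / (h + k) * R)
      = ((f h - f (- k)) - (k * L + h * R)) / (h + k)"
    unfolding cord_quotient_def by (simp add: diff_divide_distrib)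
  also have "\<dots> = (h * e\<^sub>1 + k * e\<^sub>2) / (h + k)"
    unfolding f by (simp add: algebra_simps)
  also have "\<bar>\<dots>\<bar> \<le> (h * \<bar>e\<^sub>1\<bar> + k * \<bar>e\<^sub>2\<bar>) / (h + k)"
    using assms abs_triangle_ineq[of "h * e\<^sub>1" "k * e\<^sub>2"]
    by (simp add: abs_mult divide_right_mono)
  also have "\<dots> \<le> \<bar>e\<^sub>1\<bar> + \<bar>e\<^sub>2\<bar>"
    using assms by (simp add: field_simps mult_left_mono)
  finally show ?thesis unfolding e\<^sub>1_def e\<^sub>2_def .
qed

definition cord_weight :: "real \<Rightarrow> real \<Rightarrow> nat \<Rightarrow> nat \<Rightarrow> real" where
  "cord_weight a b n m = (1 / a ^ n) / (1 / a ^ n + 1 / b ^ m)"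

text \<open>What the cord quotient over [-1/b^m, 1/a^n] approaches as n and m grow: the mean of the
  one-sided derivatives R and L, weighted by the lengths of the two halves of the cord.\<close>

definition cord_mean :: "real \<Rightarrow> real \<Rightarrow> real \<Rightarrow> real \<Rightarrow> nat \<Rightarrow> nat \<Rightarrow> real" where
  "cord_mean a b L R n m = (1 - cord_weight a b n m) * L + cord_weight a b n m * R"

lemma cord_weight_eq_logistic:
  assumes "a > 0" "b > 0"
  shows "cord_weight a b n m = logistic (real m * ln b - real n * ln a)"
proof -
  have e: "exp (- (real m * ln b - real n * ln a)) = a ^ n / b ^ m"
    using assms by (simp add: exp_diff exp_of_nat_mult)
  show ?thesis
    using assms unfolding cord_weight_def logistic_def e by (simp add: field_simps)
qed

lemma cord_mean_bounds:
  assumes "a > 0" "b > 0"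
  shows "min L R \<le> cord_mean a b L R n m" "cord_mean a b L R n m \<le> max L R"
proof -
  define w where "w = cord_weight a b n m"
  have "0 < w" "w < 1"
    unfolding w_def cord_weight_eq_logistic[OF assms] by (rule logistic_pos logistic_less_one)+
  then have "min L R \<le> (1 - w) * L + w * R" "(1 - w) * L + w * R \<le> max L R"
    using convex_bound_le[of L "max L R" R w "1 - w"] convex_bound_le[of "- L" "- min L R" "- R" w "1 - w"]
    by (simp_all add: algebra_simps)
  then show "min L R \<le> cord_mean a b L R n m" "cord_mean a b L R n m \<le> max L R"
    unfolding cord_mean_def w_def by simp_all
qed

lemma tendsto_inverse_power_zero_iff:
  fixes a :: real
  assumes "a > 1"
  shows "(\<lambda>j. 1 / a ^ nn j) \<longlonglongrightarrow> 0 \<longleftrightarrow> filterlim nn at_top sequentially"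
proof
  assume lim: "(\<lambda>j. 1 / a ^ nn j) \<longlonglongrightarrow> 0"
  show "filterlim nn at_top sequentially"
    unfolding filterlim_at_top
  proof
    fix Z
    have "\<forall>\<^sub>F j in sequentially. 1 / a ^ nn j < 1 / a ^ Z"
      using lim assms by (intro order_tendstoD(2)) auto
    then show "\<forall>\<^sub>F j in sequentially. Z \<le> nn j"
      by eventually_elim
        (use assms in \<open>smt (verit) frac_less2 linorder_le_less_linear power_strict_increasing zero_less_power\<close>)
  qed
next
  have "(\<lambda>n. 1 / a ^ n) \<longlonglongrightarrow> 0"
    using LIMSEQ_inverse_realpow_zero[OF assms] by (simp add: inverse_eq_divide)
  then show "filterlim nn at_top sequentially \<Longrightarrow> (\<lambda>j. 1 / a ^ nn j) \<longlonglongrightarrow> 0"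
    by (rule filterlim_compose)
qed

section \<open>Sequential cord derivatives as cluster values\<close>

lemma positive_mem_cord_domain_iff:
  assumes "b > 0" "x > 0"
  shows "x \<in> cord_domain a b \<longleftrightarrow> (\<exists>n\<ge>1. x = 1 / a ^ n)"
proof -
  have "- (1 / b ^ m) < 0" for m
    using assms by simp
  then show ?thesis
    using assms unfolding cord_domain_def by force
qed

lemma negative_mem_cord_domain_iff:
  assumes "a > 0" "x > 0"
  shows "- x \<in> cord_domain a b \<longleftrightarrow> (\<exists>m\<ge>1. x = 1 / b ^ m)"
proof -
  have "- x \<noteq> 1 / a ^ n" for n
    using assms by (smt (verit) zero_less_divide_1_iff zero_less_power)
  then show ?thesis
    using assms unfolding cord_domain_def by auto
qed

lemma seq_cord_deriv_cord_domain_iff: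
  assumes a: "a > 1" and b: "b > 1"
  shows "seq_cord_deriv f (cord_domain a b) y \<longleftrightarrow>
    (\<exists>nn mm. (\<forall>j. 1 \<le> nn j \<and> 1 \<le> mm j) \<and>
      filterlim nn at_top sequentially \<and> filterlim mm at_top sequentially \<and>
      (\<lambda>j. ereal (cord_quotient f (1 / a ^ nn j) (1 / b ^ mm j))) \<longlonglongrightarrow> y)"
    (is "_ \<longleftrightarrow> ?rhs")
proof
  assume "seq_cord_deriv f (cord_domain a b) y"
  then obtain h k where hk: "\<And>j. h j > 0 \<and> k j > 0 \<and> h j \<in> cord_domain a b \<and> - k j \<in> cord_domain a b"
    and h: "h \<longlonglongrightarrow> 0" and k: "k \<longlonglongrightarrow> 0"
    and lim: "(\<lambda>j. ereal (cord_quotient f (h j) (k j))) \<longlonglongrightarrow> y"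
    unfolding seq_cord_deriv_def cord_quotient_def by blast
  have "\<exists>n. 1 \<le> n \<and> h j = 1 / a ^ n" for j
    using hk[of j] positive_mem_cord_domain_iff[of b "h j" a] b by auto
  then obtain nn where nn: "\<And>j. 1 \<le> nn j" and h_eq: "h = (\<lambda>j. 1 / a ^ nn j)"
    by metis
  have "\<exists>m. 1 \<le> m \<and> k j = 1 / b ^ m" for j
    using hk[of j] negative_mem_cord_domain_iff[of a "k j" b] a by auto
  then obtain mm where mm: "\<And>j. 1 \<le> mm j" and k_eq: "k = (\<lambda>j. 1 / b ^ mm j)"
    by metis
  show ?rhs
  proof (intro exI conjI allI)
    show "filterlim nn at_top sequentially"
      using h unfolding h_eq tendsto_inverse_power_zero_iff[OF a] .
    show "filterlim mm at_top sequentially"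
      using k unfolding k_eq tendsto_inverse_power_zero_iff[OF b] .
    show "(\<lambda>j. ereal (cord_quotient f (1 / a ^ nn j) (1 / b ^ mm j))) \<longlonglongrightarrow> y"
      using lim unfolding h_eq k_eq .
  qed (use nn mm in auto)
next
  assume ?rhs
  then obtain nn mm where nm: "\<And>j. 1 \<le> nn j \<and> 1 \<le> mm j"
    and nn: "filterlim nn at_top sequentially" and mm: "filterlim mm at_top sequentially"
    and lim: "(\<lambda>j. ereal (cord_quotient f (1 / a ^ nn j) (1 / b ^ mm j))) \<longlonglongrightarrow> y"
    by blast
  show "seq_cord_deriv f (cord_domain a b) y"
    unfolding seq_cord_deriv_def
  proof (intro exI conjI allI)
    fix j
    show "1 / a ^ nn j > 0" "1 / b ^ mm j > 0"
      using a b by simp_all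
    show "1 / a ^ nn j \<in> cord_domain a b" "- (1 / b ^ mm j) \<in> cord_domain a b"
      using nm[of j] unfolding cord_domain_def by blast+
  next
    show "(\<lambda>j. 1 / a ^ nn j) \<longlonglongrightarrow> 0" "(\<lambda>j. 1 / b ^ mm j) \<longlonglongrightarrow> 0"
      using nn mm tendsto_inverse_power_zero_iff[OF a] tendsto_inverse_power_zero_iff[OF b] by blast+
    show "(\<lambda>j. ereal ((f (1 / a ^ nn j) - f (- (1 / b ^ mm j))) / (1 / a ^ nn j + 1 / b ^ mm j))) \<longlonglongrightarrow> y"
      using lim unfolding cord_quotient_def .
  qed
qed

locale one_sided_derivative_limits =
  fixes a b L R :: real and f :: "real \<Rightarrow> real"
  assumes a: "a > 1" and b: "b > 1"
    and lim_right: "(\<lambda>n. f (1 / a ^ n) / (1 / a ^ n)) \<longlonglongrightarrow> R"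
    and lim_left: "(\<lambda>n. f (- (1 / b ^ n)) / (- (1 / b ^ n))) \<longlonglongrightarrow> L"
begin

lemma cord_quotient_minus_cord_mean_tendsto_zero:
  assumes nn: "filterlim nn at_top sequentially" and mm: "filterlim mm at_top sequentially"
  shows "(\<lambda>j. cord_quotient f (1 / a ^ nn j) (1 / b ^ mm j) - cord_mean a b L R (nn j) (mm j))
    \<longlonglongrightarrow> 0"
proof (rule Lim_null_comparison)
  have "(\<lambda>j. f (1 / a ^ nn j) / (1 / a ^ nn j) - R) \<longlonglongrightarrow> 0"
    using filterlim_compose[OF LIM_zero[OF lim_right] nn] .
  moreover have "(\<lambda>j. f (- (1 / b ^ mm j)) / (- (1 / b ^ mm j)) - L) \<longlonglongrightarrow> 0"
    using filterlim_compose[OF LIM_zero[OF lim_left] mm] .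
  ultimately show "(\<lambda>j. \<bar>f (1 / a ^ nn j) / (1 / a ^ nn j) - R\<bar>
      + \<bar>f (- (1 / b ^ mm j)) / (- (1 / b ^ mm j)) - L\<bar>) \<longlonglongrightarrow> 0"
    using tendsto_add[OF tendsto_rabs_zero tendsto_rabs_zero] by simp
  show "\<forall>\<^sub>F j in sequentially.
      norm (cord_quotient f (1 / a ^ nn j) (1 / b ^ mm j) - cord_mean a b L R (nn j) (mm j))
      \<le> \<bar>f (1 / a ^ nn j) / (1 / a ^ nn j) - R\<bar> + \<bar>f (- (1 / b ^ mm j)) / (- (1 / b ^ mm j)) - L\<bar>"
  proof (intro always_eventually allI)
    fix j
    show "norm (cord_quotient f (1 / a ^ nn j) (1 / b ^ mm j) - cord_mean a b L R (nn j) (mm j))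
      \<le> \<bar>f (1 / a ^ nn j) / (1 / a ^ nn j) - R\<bar> + \<bar>f (- (1 / b ^ mm j)) / (- (1 / b ^ mm j)) - L\<bar>"
      using cord_quotient_approx[of "1 / a ^ nn j" "1 / b ^ mm j" f L R] a b
      unfolding cord_mean_def cord_weight_def real_norm_def by simp
  qed
qed

lemma seq_cord_deriv_iff_cluster_value:
  "seq_cord_deriv f (cord_domain a b) y \<longleftrightarrow> (\<exists>x. y = ereal x \<and> cluster_value (cord_mean a b L R) x)"
proof
  assume "seq_cord_deriv f (cord_domain a b) y"
  then obtain nn mm where nn: "filterlim nn at_top sequentially" and mm: "filterlim mm at_top sequentially"
    and lim: "(\<lambda>j. ereal (cord_quotient f (1 / a ^ nn j) (1 / b ^ mm j))) \<longlonglongrightarrow> y"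
    unfolding seq_cord_deriv_cord_domain_iff[OF a b] by blast
  define q where "q j = cord_quotient f (1 / a ^ nn j) (1 / b ^ mm j)" for j
  define G where "G j = cord_mean a b L R (nn j) (mm j)" for j
  have qG: "(\<lambda>j. q j - G j) \<longlonglongrightarrow> 0"
    unfolding q_def G_def by (rule cord_quotient_minus_cord_mean_tendsto_zero[OF nn mm])
  have G_bounds: "min L R \<le> G j" "G j \<le> max L R" for j
    unfolding G_def using a b by (simp_all add: cord_mean_bounds)
  have "\<forall>\<^sub>F j in sequentially. dist (q j - G j) 0 < 1"
    using qG by (rule tendstoD) simp
  then have close: "\<forall>\<^sub>F j in sequentially. min L R - 1 \<le> q j \<and> q j \<le> max L R + 1"
  proof eventually_elim
    case (elim j)
    then show ?case
      using G_bounds[of j] unfolding dist_real_def by linarith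
  qed
  have "ereal (min L R - 1) \<le> y"
    using lim by (rule tendsto_lowerbound) (use close in \<open>auto simp: q_def elim: eventually_mono\<close>)
  moreover have "y \<le> ereal (max L R + 1)"
    using lim by (rule tendsto_upperbound) (use close in \<open>auto simp: q_def elim: eventually_mono\<close>)
  ultimately obtain x where x: "y = ereal x"
    by (cases y) auto
  have "q \<longlonglongrightarrow> x"
    using lim unfolding q_def x by simp
  then have "(\<lambda>j. q j - (q j - G j)) \<longlonglongrightarrow> x - 0"
    using qG by (rule tendsto_diff)
  then have "cluster_value (cord_mean a b L R) x"
    unfolding G_def by (intro cluster_value_sequentially[OF nn mm]) simp
  with x show "\<exists>x. y = ereal x \<and> cluster_value (cord_mean a b L R) x" by blast
next
  assume "\<exists>x. y = ereal x \<and> cluster_value (cord_mean a b L R) x"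
  then obtain x where y: "y = ereal x" and "cluster_value (cord_mean a b L R) x"
    by blast
  then obtain nn mm where nm: "\<And>j. j < nn j" "\<And>j. j < mm j"
    and lim: "(\<lambda>j. cord_mean a b L R (nn j) (mm j)) \<longlonglongrightarrow> x"
    using cluster_valueE by blast
  have nn: "filterlim nn at_top sequentially" and mm: "filterlim mm at_top sequentially"
    using nm by (auto intro: filterlim_at_top_if_ge_ident less_imp_le)
  have "(\<lambda>j. cord_mean a b L R (nn j) (mm j)
      + (cord_quotient f (1 / a ^ nn j) (1 / b ^ mm j) - cord_mean a b L R (nn j) (mm j))) \<longlonglongrightarrow> x + 0"
    using lim cord_quotient_minus_cord_mean_tendsto_zero[OF nn mm] by (rule tendsto_add)
  then have "(\<lambda>j. ereal (cord_quotient f (1 / a ^ nn j) (1 / b ^ mm j))) \<longlonglongrightarrow> y"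
    unfolding y by simp
  moreover have "\<forall>j. 1 \<le> nn j \<and> 1 \<le> mm j"
    using nm by (metis less_one not_less_zero not_le)
  ultimately show "seq_cord_deriv f (cord_domain a b) y"
    unfolding seq_cord_deriv_cord_domain_iff[OF a b] using nn mm by blast
qed

end

section \<open>Incommensurable bases\<close>

lemma cluster_value_log_exponent_if_irrational:
  assumes a: "a > 1" and b: "b > 1" and irr: "ln a / ln b \<notin> \<rat>"
  shows "cluster_value (\<lambda>n m. real m * ln b - real n * ln a) y"
  unfolding cluster_value_def dist_real_def
proof (intro allI impI)
  fix \<epsilon> :: real and N :: nat assume "\<epsilon> > 0"
  define \<theta> where "\<theta> = ln a / ln b"
  have "ln a > 0" "ln b > 0" using a b by simp_all
  then have "\<theta> > 0" and ln_a: "ln a = \<theta> * ln b" unfolding \<theta>_def by simp_all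
  obtain M\<^sub>0 :: nat where M\<^sub>0: "real N + 1 - y / ln b < real M\<^sub>0 * \<theta>"
    using reals_Archimedean3[OF \<open>\<theta> > 0\<close>] by blast
  define M where "M = max M\<^sub>0 N"
  have "real M\<^sub>0 * \<theta> \<le> real M * \<theta>"
    using \<open>\<theta> > 0\<close> unfolding M_def by (intro mult_right_mono) simp_all
  then have M: "real N + 1 - y / ln b < real M * \<theta>"
    using M\<^sub>0 by linarith
  define \<delta> where "\<delta> = min (\<epsilon> / ln b) 1"
  have "\<delta> > 0" unfolding \<delta>_def using \<open>\<epsilon> > 0\<close> \<open>ln b > 0\<close> by simp
  then obtain h k :: int where "k > 0" and hk: "\<bar>of_int k * \<theta> - of_int h - (- y / ln b - real M * \<theta>)\<bar> < \<delta>"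
    using sequence_of_fractional_parts_is_dense[OF irr[folded \<theta>_def]] by metis
  have "of_int k * \<theta> \<ge> 0" using \<open>k > 0\<close> \<open>\<theta> > 0\<close> by simp
  then have h_large: "real_of_int h > real N"
    using hk M unfolding \<delta>_def by linarith
  define n where "n = M + nat k"
  define m where "m = nat h"
  have n: "real n = real M + of_int k" unfolding n_def using \<open>k > 0\<close> by simp
  have m: "real m = of_int h" unfolding m_def using h_large by simp
  have "real m * ln b - real n * ln a - y
      = - ln b * (of_int k * \<theta> - of_int h - (- y / ln b - real M * \<theta>))"
    unfolding n m ln_a using \<open>ln b > 0\<close> by (simp add: field_simps)
  also have "\<bar>\<dots>\<bar> < ln b * \<delta>"
    using hk \<open>ln b > 0\<close> by (simp add: abs_mult)
  also have "\<dots> \<le> \<epsilon>"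
    unfolding \<delta>_def using \<open>ln b > 0\<close> by (simp add: min_def field_simps)
  finally have "\<bar>real m * ln b - real n * ln a - y\<bar> < \<epsilon>" .
  moreover have "N \<le> n" "N \<le> m"
    using h_large unfolding n_def m_def M_def by auto
  ultimately show "\<exists>n\<ge>N. \<exists>m\<ge>N. \<bar>real m * ln b - real n * ln a - y\<bar> < \<epsilon>"
    by blast
qed

lemma cluster_value_cord_weight_if_irrational:
  assumes a: "a > 1" and b: "b > 1" and irr: "ln a / ln b \<notin> \<rat>" and t: "t \<in> {0..1}"
  shows "cluster_value (cord_weight a b) t"
proof -
  have weight: "cord_weight a b = (\<lambda>n m. logistic (real m * ln b - real n * ln a))"
    using a b by (intro ext) (simp add: cord_weight_eq_logistic)
  have "cluster_value (cord_weight a b) s" if "s \<in> {0<..<1}" for s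
  proof -
    have "logistic (ln (s / (1 - s))) = s"
      using that by (simp add: logistic_logit)
    then show ?thesis
      using cluster_value_isCont[OF cluster_value_log_exponent_if_irrational[OF a b irr] isCont_logistic]
      unfolding weight by metis
  qed
  then have "closure {0<..<1} \<subseteq> {s. cluster_value (cord_weight a b) s}"
    by (intro closure_minimal closed_cluster_values) blast
  then show ?thesis
    using t by auto
qed

lemma cluster_value_cord_mean_if_irrational:
  assumes a: "a > 1" and b: "b > 1" and irr: "ln a / ln b \<notin> \<rat>" and x: "x \<in> {min L R..max L R}"
  shows "cluster_value (cord_mean a b L R) x"
proof -
  have "x \<in> closed_segment L R"
    using x by (auto simp: closed_segment_eq_real_ivl)
  then obtain t where t: "t \<in> {0..1}" and x_eq: "x = (1 - t) * L + t * R"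
    unfolding closed_segment_def by auto
  have "isCont (\<lambda>t. (1 - t) * L + t * R) t"
    by (intro continuous_intros)
  from cluster_value_isCont[OF cluster_value_cord_weight_if_irrational[OF a b irr t] this]
  show ?thesis
    unfolding x_eq cord_mean_def .
qed

section \<open>Commensurable bases\<close>

lemma powers_eq_if_log_ratio_rational:
  fixes a b :: real
  assumes a: "a > 1" and b: "b > 1" and rat: "ln a / ln b \<in> \<rat>"
  obtains p q :: nat where "0 < p" "0 < q" "a ^ q = b ^ p"
proof -
  obtain P Q :: int where "Q > 0" and PQ: "ln a / ln b = of_int P / of_int Q"
    using Rats_cases'[OF rat] by metis
  have "ln a > 0" "ln b > 0" using a b by simp_all
  then have "of_int P / of_int Q > (0::real)"
    unfolding PQ[symmetric] by simp
  then have "P > 0"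
    using \<open>Q > 0\<close> by (simp add: zero_less_divide_iff)
  have "real (nat Q) * ln a = real (nat P) * ln b"
    using PQ \<open>ln b > 0\<close> \<open>P > 0\<close> \<open>Q > 0\<close> by (simp add: field_simps)
  then have "a ^ nat Q = b ^ nat P"
    using a b by (metis exp_ln exp_of_nat_mult less_trans zero_less_one)
  with \<open>P > 0\<close> \<open>Q > 0\<close> show ?thesis
    by (intro that) simp_all
qed

lemma cord_weight_periodic:
  fixes a b :: real
  assumes "a > 0" "b > 0" "a ^ q = b ^ p"
  shows "cord_weight a b (n + k * q) (m + k * p) = cord_weight a b n m"
proof -
  have "a ^ (n + k * q) = a ^ n * (b ^ p) ^ k" "b ^ (m + k * p) = b ^ m * (b ^ p) ^ k"
    by (simp_all add: power_add mult.commute[of k] power_mult assms(3)[symmetric])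
  then show ?thesis
    using assms unfolding cord_weight_def by (simp add: field_simps)
qed

lemma cluster_value_cord_mean_if_powers_eq:
  assumes "a > 0" "b > 0" "0 < p" "0 < q" "a ^ q = b ^ p"
  shows "cluster_value (cord_mean a b L R) (cord_mean a b L R n m)"
proof (rule cluster_value_sequentially[where nn = "\<lambda>k. n + k * q" and mm = "\<lambda>k. m + k * p"])
  show "filterlim (\<lambda>k. n + k * q) at_top sequentially" "filterlim (\<lambda>k. m + k * p) at_top sequentially"
    using assms(3,4) by (auto intro!: filterlim_at_top_if_ge_ident trans_le_add2)
  show "(\<lambda>k. cord_mean a b L R (n + k * q) (m + k * p)) \<longlonglongrightarrow> cord_mean a b L R n m"
    using assms(1,2,5) by (simp add: cord_mean_def cord_weight_periodic)
qed

lemma cord_weight_mem_if_powers_eq: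
  assumes a: "a > 1" and b: "b > 1" and "0 < q" and pq: "a ^ q = b ^ p"
  defines "c \<equiv> ln b / real q"
  shows "cord_weight a b n m \<in> range (\<lambda>k. logistic (c * real k)) \<union> range (\<lambda>k. logistic (- (c * real k)))"
proof -
  have "real q * ln a = real p * ln b"
    using arg_cong[OF pq, of ln] by (simp add: ln_realpow)
  then have exponent: "real m * ln b - real n * ln a = c * (real (m * q) - real (n * p))"
    unfolding c_def using \<open>0 < q\<close> by (simp add: field_simps)
  have weight: "cord_weight a b n m = logistic (c * (real (m * q) - real (n * p)))"
    unfolding exponent[symmetric] using a b by (simp add: cord_weight_eq_logistic)
  show ?thesis
  proof (cases "n * p \<le> m * q")
    case True
    then have "cord_weight a b n m = logistic (c * real (m * q - n * p))"
      unfolding weight by (simp add: of_nat_diff)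
    then show ?thesis by blast
  next
    case False
    then have "cord_weight a b n m = logistic (- (c * real (n * p - m * q)))"
      unfolding weight by (simp add: of_nat_diff algebra_simps)
    then show ?thesis by blast
  qed
qed

lemma islimpt_cord_means_if_powers_eq:
  assumes a: "a > 1" and b: "b > 1" and "0 < q" and pq: "a ^ q = b ^ p"
    and limpt: "x islimpt ereal ` range (case_prod (cord_mean a b L R))"
  shows "x = ereal R \<or> x = ereal L"
proof -
  define c where "c = ln b / real q"
  have "c > 0" unfolding c_def using b \<open>0 < q\<close> by simp
  define \<phi> where "\<phi> t = ereal ((1 - t) * L + t * R)" for t
  have \<phi>: "isCont \<phi> t" for t
    unfolding \<phi>_def by (intro continuous_intros)
  have "ereal ` range (case_prod (cord_mean a b L R))
      \<subseteq> range (\<lambda>k. \<phi> (logistic (c * real k))) \<union> range (\<lambda>k. \<phi> (logistic (- (c * real k))))"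
  proof
    fix y assume "y \<in> ereal ` range (case_prod (cord_mean a b L R))"
    then obtain n m where "y = \<phi> (cord_weight a b n m)"
      unfolding \<phi>_def cord_mean_def by auto
    then show "y \<in> range (\<lambda>k. \<phi> (logistic (c * real k))) \<union> range (\<lambda>k. \<phi> (logistic (- (c * real k))))"
      using cord_weight_mem_if_powers_eq[OF a b \<open>0 < q\<close> pq, of n m] unfolding c_def by auto
  qed
  then have "x islimpt range (\<lambda>k. \<phi> (logistic (c * real k))) \<union> range (\<lambda>k. \<phi> (logistic (- (c * real k))))"
    by (rule islimpt_subset[OF limpt])
  then have "x islimpt range (\<lambda>k. \<phi> (logistic (c * real k)))
      \<or> x islimpt range (\<lambda>k. \<phi> (logistic (- (c * real k))))"
    unfolding islimpt_Un .
  moreover have "filterlim (\<lambda>k. c * real k) at_top sequentially"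
    using \<open>c > 0\<close> by real_asymp
  then have "(\<lambda>k. \<phi> (logistic (c * real k))) \<longlonglongrightarrow> \<phi> 1"
    by (intro isCont_tendsto_compose[OF \<phi>] filterlim_compose[OF logistic_tendsto_at_top])
  moreover have "filterlim (\<lambda>k. - (c * real k)) at_bot sequentially"
    using \<open>c > 0\<close> by real_asymp
  then have "(\<lambda>k. \<phi> (logistic (- (c * real k)))) \<longlonglongrightarrow> \<phi> 0"
    by (intro isCont_tendsto_compose[OF \<phi>] filterlim_compose[OF logistic_tendsto_at_bot])
  ultimately have "x = \<phi> 1 \<or> x = \<phi> 0"
    using sequence_unique_limpt by metis
  then show ?thesis
    unfolding \<phi>_def by simp
qed

lemma endpoints_islimpt_cord_means:
  assumes a: "a > 1" and b: "b > 1" and "L \<noteq> R"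
  shows "ereal R islimpt ereal ` range (case_prod (cord_mean a b L R))"
    and "ereal L islimpt ereal ` range (case_prod (cord_mean a b L R))"
proof -
  have mean: "cord_mean a b L R n m = L + (R - L) * logistic (real m * ln b - real n * ln a)" for n m
    using a b by (simp add: cord_mean_def cord_weight_eq_logistic algebra_simps)
  have "ln a > 0" "ln b > 0"
    using a b by simp_all
  have ln_b_mult: "filterlim (\<lambda>m. real m * ln b) at_top sequentially"
    and ln_a_mult: "filterlim (\<lambda>n. real n * ln a) at_top sequentially"
    by (intro filterlim_at_top_mult_tendsto_pos[OF tendsto_const] filterlim_real_sequentially
        \<open>ln a > 0\<close> \<open>ln b > 0\<close>)+
  have subset: "range (\<lambda>j. ereal (cord_mean a b L R (n j) (m j))) \<subseteq> ereal ` range (case_prod (cord_mean a b L R))"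
    for n m :: "nat \<Rightarrow> nat"
    by auto
  have "(\<lambda>m. logistic (real m * ln b)) \<longlonglongrightarrow> 1"
    by (rule filterlim_compose[OF logistic_tendsto_at_top ln_b_mult])
  then have "(\<lambda>m. L + (R - L) * logistic (real m * ln b)) \<longlonglongrightarrow> L + (R - L) * 1"
    by (intro tendsto_add tendsto_mult tendsto_const)
  then have "(\<lambda>m. ereal (cord_mean a b L R 0 m)) \<longlonglongrightarrow> ereal R"
    by (simp add: mean)
  moreover have "cord_mean a b L R 0 m \<noteq> R" for m
  proof -
    have "cord_mean a b L R 0 m - R = (L - R) * (1 - logistic (real m * ln b))"
      by (simp add: mean algebra_simps)
    then show ?thesis
      using logistic_less_one[of "real m * ln b"] \<open>L \<noteq> R\<close> by auto
  qed
  ultimately have "ereal R islimpt range (\<lambda>m. ereal (cord_mean a b L R 0 m))"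
    by (intro islimpt_range_if_tendsto) simp_all
  then show "ereal R islimpt ereal ` range (case_prod (cord_mean a b L R))"
    using subset by (rule islimpt_subset)
  have "(\<lambda>n. logistic (- (real n * ln a))) \<longlonglongrightarrow> 0"
    using filterlim_compose[OF logistic_tendsto_at_bot ln_a_mult[unfolded filterlim_uminus_at_top]] .
  then have "(\<lambda>n. L + (R - L) * logistic (- (real n * ln a))) \<longlonglongrightarrow> L + (R - L) * 0"
    by (intro tendsto_add tendsto_mult tendsto_const)
  then have "(\<lambda>n. ereal (cord_mean a b L R n 0)) \<longlonglongrightarrow> ereal L"
    by (simp add: mean)
  moreover have "cord_mean a b L R n 0 \<noteq> L" for n
  proof -
    have "cord_mean a b L R n 0 - L = (R - L) * logistic (- (real n * ln a))"
      by (simp add: mean)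
    then show ?thesis
      using logistic_pos[of "- (real n * ln a)"] \<open>L \<noteq> R\<close> by auto
  qed
  ultimately have "ereal L islimpt range (\<lambda>n. ereal (cord_mean a b L R n 0))"
    by (intro islimpt_range_if_tendsto) simp_all
  then show "ereal L islimpt ereal ` range (case_prod (cord_mean a b L R))"
    using subset by (rule islimpt_subset)
qed

context one_sided_derivative_limits
begin

lemma islimpt_seq_cord_derivs_iff_if_powers_eq:
  assumes "0 < p" "0 < q" "a ^ q = b ^ p"
  shows "x islimpt {y. seq_cord_deriv f (cord_domain a b) y}
    \<longleftrightarrow> x islimpt ereal ` range (case_prod (cord_mean a b L R))"
proof -
  let ?S = "{y. seq_cord_deriv f (cord_domain a b) y}"
  let ?T = "ereal ` range (case_prod (cord_mean a b L R))"
  have "?T \<subseteq> ?S"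
    using cluster_value_cord_mean_if_powers_eq[OF _ _ assms] a b
    by (auto simp: seq_cord_deriv_iff_cluster_value)
  moreover have "?S \<subseteq> closure ?T"
  proof
    fix y assume "y \<in> ?S"
    then obtain x where y: "y = ereal x" and "cluster_value (cord_mean a b L R) x"
      using seq_cord_deriv_iff_cluster_value by blast
    then obtain nn mm where "(\<lambda>j. cord_mean a b L R (nn j) (mm j)) \<longlonglongrightarrow> x"
      using cluster_valueE by blast
    then have "(\<lambda>j. ereal (cord_mean a b L R (nn j) (mm j))) \<longlonglongrightarrow> y"
      unfolding y by simp
    then show "y \<in> closure ?T"
      unfolding closure_sequential by (intro exI[of _ "\<lambda>j. ereal (cord_mean a b L R (nn j) (mm j))"]) auto
  qed
  ultimately show ?thesis
    using islimpt_subset islimpt_if_subset_closure by blast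
qed

end

theorem theorem4p7:
  fixes a b R L :: real and f :: "real \<Rightarrow> real"
  assumes "a > 1" and "b > 1"
    and "f 0 = 0"
    and "(\<lambda>n. f (1 / a ^ n) / (1 / a ^ n)) \<longlonglongrightarrow> R"
    and "(\<lambda>n. f (- (1 / b ^ n)) / (- (1 / b ^ n))) \<longlonglongrightarrow> L"
  shows "(ln a / ln b \<in> \<rat> \<longrightarrow>
            {x :: ereal. x islimpt {y. seq_cord_deriv f (cord_domain a b) y}} \<subseteq> {ereal R, ereal L} \<and>
            (R \<noteq> L \<longrightarrow>
              {x :: ereal. x islimpt {y. seq_cord_deriv f (cord_domain a b) y}} = {ereal R, ereal L}))
       \<and> (ln a / ln b \<notin> \<rat> \<longrightarrow>
            (\<forall>x \<in> {min L R .. max L R}. seq_cord_deriv f (cord_domain a b) (ereal x)))"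
proof -
  interpret one_sided_derivative_limits a b L R f
    using assms(1,2,4,5) by unfold_locales
  show ?thesis
  proof (intro conjI impI ballI)
    assume "ln a / ln b \<in> \<rat>"
    then obtain p q where pq: "0 < p" "0 < q" "a ^ q = b ^ p"
      using powers_eq_if_log_ratio_rational a b by metis
    note limpts = islimpt_seq_cord_derivs_iff_if_powers_eq[OF pq]
    show "{x. x islimpt {y. seq_cord_deriv f (cord_domain a b) y}} \<subseteq> {ereal R, ereal L}"
      using islimpt_cord_means_if_powers_eq[OF a b pq(2,3)] by (auto simp: limpts)
    assume "R \<noteq> L"
    then show "{x. x islimpt {y. seq_cord_deriv f (cord_domain a b) y}} = {ereal R, ereal L}"
      using islimpt_cord_means_if_powers_eq[OF a b pq(2,3)] endpoints_islimpt_cord_means[OF a b]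
      by (auto simp: limpts)
  next
    assume "ln a / ln b \<notin> \<rat>"
    then show "seq_cord_deriv f (cord_domain a b) (ereal x)" if "x \<in> {min L R .. max L R}" for x
      using cluster_value_cord_mean_if_irrational[OF a b _ that] seq_cord_deriv_iff_cluster_value by blast
  qed
qed

end
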